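(* Let $m$ be an odd positive integer and $n$ a positive integer. Then there is no non-symmetric tensor $\mathbb{A}\in T_{m,n}$ that is a $P$ tensor.
   Context: $T_{m,n}$ denotes the set of real $m$th order $n$-dimensional tensors $\mathbb{A}=(a_{i_1i_2\ldots i_m})$ with $i_j\in[n]=\{1,\ldots,n\}$. A tensor is symmetric if its entries $a_{i_1\ldots i_m}$ are invariant under any permutation of the indices $i_1,\ldots,i_m$. For $x\in\mathbb{R}^n$, $(\mathbb{A}x^{m-1})_i=\sum_{i_2,\ldots,i_m=1}^n a_{ii_2\ldots i_m}x_{i_2}\cdots x_{i_m}$, $i\in[n]$. A tensor $\mathbb{A}\in T_{m,n}$ is a $P$ tensor if for every nonzero $x\in\mathbb{R}^n$, $\max_{i\in[n]} x_i(\mathbb{A}x^{m-1})_i>0$. *)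

theory Defs
  imports Complex_Main "HOL-Library.Multiset"
begin

text \<open>A real tensor of order m and dimension n is modelled as a function from index
lists to reals; only index lists of length m with entries in {0..<n} are relevant
(indices are 0-based, i.e. [n] is rendered as {0..<n}).\<close>

definition idx :: "nat \<Rightarrow> nat \<Rightarrow> nat list set" where
  "idx k n = {is. length is = k \<and> set is \<subseteq> {0..<n}}"

text \<open>Symmetric: entries invariant under any permutation of the m indices
(two index lists are permutations of each other iff they have equal multisets).\<close>
definition sym_tensor :: "nat \<Rightarrow> nat \<Rightarrow> (nat list \<Rightarrow> real) \<Rightarrow> bool" where
  "sym_tensor m n A \<longleftrightarrow>
     (\<forall>is \<in> idx m n. \<forall>js. mset js = mset is \<longrightarrow> A js = A is)"

definition tensor_apply :: "nat \<Rightarrow> nat \<Rightarrow> (nat list \<Rightarrow> real) \<Rightarrow> (nat \<Rightarrow> real) \<Rightarrow> nat \<Rightarrow> real" where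
  "tensor_apply m n A x i = (\<Sum>js \<in> idx (m - 1) n. A (i # js) * (\<Prod>j \<leftarrow> js. x j))"

definition P_tensor :: "nat \<Rightarrow> nat \<Rightarrow> (nat list \<Rightarrow> real) \<Rightarrow> bool" where
  "P_tensor m n A \<longleftrightarrow>
     (\<forall>x :: nat \<Rightarrow> real. (\<exists>i<n. x i \<noteq> 0) \<longrightarrow>
        Max ((\<lambda>i. x i * tensor_apply m n A x i) ` {0..<n}) > 0)"

end

theory Submission
  imports Defs
begin

text \<open>For odd \<open>m\<close> the map \<open>x \<mapsto> A x\<^sup>m\<^sup>-\<^sup>1\<close> is even, so \<open>x\<^sub>i (A x\<^sup>m\<^sup>-\<^sup>1)\<^sub>i\<close> is odd in \<open>x\<close>.
For a vector supported on a single coordinate the \<open>P\<close> condition only sees that coordinate,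
so applied to \<open>e\<^sub>1\<close> and \<open>-e\<^sub>1\<close> it requires a number and its negative to be positive.
Hence no tensor of odd order, symmetric or not, is a \<open>P\<close> tensor.\<close>

lemma prod_list_uminus:
  fixes x :: "'a \<Rightarrow> 'b::comm_ring_1"
  shows "(\<Prod>j \<leftarrow> js. - x j) = (-1) ^ length js * (\<Prod>j \<leftarrow> js. x j)"
  by (induction js) auto

lemma tensor_apply_uminus:
  assumes "odd m"
  shows "tensor_apply m n A (\<lambda>i. - x i) i = tensor_apply m n A x i"
  unfolding tensor_apply_def
proof (rule sum.cong[OF refl])
  fix js assume "js \<in> idx (m - 1) n"
  then have "even (length js)"
    using assms by (simp add: idx_def)
  then show "A (i # js) * (\<Prod>j \<leftarrow> js. - x j) = A (i # js) * (\<Prod>j \<leftarrow> js. x j)"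
    by (simp add: prod_list_uminus)
qed

lemma P_tensor_single_coordinate:
  assumes "P_tensor m n A" and "k < n" and "x k \<noteq> 0" and "\<And>i. i \<noteq> k \<Longrightarrow> x i = 0"
  shows "x k * tensor_apply m n A x k > 0"
proof -
  let ?S = "(\<lambda>i. x i * tensor_apply m n A x i) ` {0..<n}"
  have "Max ?S > 0"
    using assms(1-3) unfolding P_tensor_def by blast
  moreover have "Max ?S \<in> ?S"
    using assms(2) by (intro Max_in) auto
  ultimately obtain i where "i < n" and "x i * tensor_apply m n A x i > 0"
    by auto
  moreover from this have "i = k"
    using assms(4) by force
  ultimately show ?thesis by simp
qed

lemma odd_order_not_P_tensor:
  assumes "odd m" and "n > 0"
  shows "\<not> P_tensor m n A"
proof
  assume P: "P_tensor m n A"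
  define e :: "nat \<Rightarrow> real" where "e = (\<lambda>i. if i = 0 then 1 else 0)"
  have "e 0 * tensor_apply m n A e 0 > 0"
    using P_tensor_single_coordinate[OF P assms(2), of e] by (simp add: e_def)
  moreover have "- e 0 * tensor_apply m n A (\<lambda>i. - e i) 0 > 0"
    using P_tensor_single_coordinate[OF P assms(2), of "\<lambda>i. - e i"] by (simp add: e_def)
  ultimately show False
    using tensor_apply_uminus[OF assms(1)] by (simp add: e_def)
qed

theorem corollary2p2:
  fixes m n :: nat
  assumes "odd m" and "m > 0" and "n > 0"
  shows "\<not> (\<exists>A :: nat list \<Rightarrow> real. \<not> sym_tensor m n A \<and> P_tensor m n A)"
  using odd_order_not_P_tensor[OF assms(1,3)] by blast

end
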